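(* Let $f$ be an essentially sub-linear dimension function. Then $\lim_{x\to 0}\frac{f(x)}{x}=\infty$, and there exist constants $C\ge 1$ and $\delta>0$ such that $\frac{f(x_2)}{x_2}\le C\,\frac{f(x_1)}{x_1}$ whenever $0<x_1<x_2<\delta$.
   Context: A dimension function is an increasing continuous function $f:\mathbb{R}_+\to\mathbb{R}_+$ with $f(r)\to 0$ as $r\to 0$. It is essentially sub-linear if there exists $B>1$ such that $\limsup_{x\to 0}\frac{f(Bx)}{f(x)}<B$. *)

theory Defs
  imports "HOL-Analysis.Analysis"
begin

definition dimension_function :: "(real \<Rightarrow> real) \<Rightarrow> bool" where
  "dimension_function f \<longleftrightarrow>
     mono_on {0<..} f \<and> continuous_on {0<..} f \<and> (\<forall>r>0. f r > 0) \<and>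
     (f \<longlongrightarrow> 0) (at_right 0)"

definition essentially_sublinear :: "(real \<Rightarrow> real) \<Rightarrow> bool" where
  "essentially_sublinear f \<longleftrightarrow>
     (\<exists>B>1. Limsup (at_right 0) (\<lambda>x. ereal (f (B * x) / f x)) < ereal B)"

end

theory Submission
  imports Defs
begin

text \<open>Write \<open>g x = f x / x\<close>. Essential sub-linearity gives \<open>B > 1\<close>, \<open>q < B\<close> and \<open>d > 0\<close> with
  \<open>f (B x) \<le> q f x\<close> on \<open>(0, d)\<close>, i.e. \<open>g (B x) \<le> (q / B) g x\<close> with \<open>q / B < 1\<close>.
  Between \<open>x\<close> and \<open>B x\<close> monotonicity of \<open>f\<close> costs at most a factor \<open>q\<close>, and chaining such
  steps shows that \<open>g\<close> is decreasing up to the constant \<open>q\<close> on \<open>(0, d)\<close>. Iterating the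
  scaling step downwards, \<open>g (x / B\<^sup>n) \<ge> (B / q)\<^sup>n g x\<close>, so \<open>g\<close> blows up at \<open>0\<close>.\<close>

locale sublinear_scaling =
  fixes f :: "real \<Rightarrow> real" and B q d :: real
  assumes pos: "\<And>x. 0 < x \<Longrightarrow> 0 < f x"
    and mono: "mono_on {0<..} f"
    and B_gt_1: "1 < B"
    and q_less_B: "q < B"
    and d_pos: "0 < d"
    and scaling: "\<And>x. 0 < x \<Longrightarrow> x < d \<Longrightarrow> f (B * x) \<le> q * f x"
begin

lemma monoD: "0 < x \<Longrightarrow> x \<le> y \<Longrightarrow> f x \<le> f y"
  using mono by (auto intro: mono_onD)

lemma q_ge_1: "1 \<le> q"
proof -
  have "f (d / 2) \<le> f (B * (d / 2))"
    using d_pos B_gt_1 by (intro monoD) auto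
  also have "\<dots> \<le> q * f (d / 2)"
    using d_pos by (intro scaling) auto
  finally show ?thesis
    using pos[of "d / 2"] d_pos by simp
qed

lemma ratio_scaling:
  assumes "0 < x" "x < d"
  shows "f (B * x) / (B * x) \<le> q / B * (f x / x)"
proof -
  have "f (B * x) / (B * x) = f (B * x) / B / x" by simp
  also have "\<dots> \<le> q * f x / B / x"
    using scaling[OF assms] B_gt_1 assms by (simp add: divide_right_mono)
  finally show ?thesis by simp
qed

lemma ratio_almost_antimono:
  assumes "0 < x1" "x1 \<le> x2" "x2 < d"
  shows "f x2 / x2 \<le> q * (f x1 / x1)"
proof -
  obtain n where "x2 / x1 < B ^ n"
    using real_arch_pow[OF B_gt_1] by blast
  with assms have "x2 \<le> B ^ n * x1"
    by (simp add: divide_less_eq)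
  with assms show ?thesis
  proof (induction n arbitrary: x2)
    case 0
    then have "x2 = x1" by simp
    moreover have "0 < f x1 / x1"
      using pos[OF \<open>0 < x1\<close>] \<open>0 < x1\<close> by simp
    ultimately show ?case
      using q_ge_1 mult_le_cancel_right1[of "f x1 / x1" q] by (simp add: mult.commute)
  next
    case (Suc n)
    show ?case
    proof (cases "x2 \<le> B * x1")
      case True
      have "f x2 / x2 \<le> f (B * x1) / x2"
        using Suc.prems True pos[of x2] by (intro divide_right_mono monoD) auto
      also have "\<dots> \<le> f (B * x1) / x1"
        using Suc.prems pos[of "B * x1"] B_gt_1 by (intro divide_left_mono) auto
      also have "\<dots> \<le> q * f x1 / x1"
        using scaling[of x1] Suc.prems by (simp add: divide_right_mono)
      finally show ?thesis by simp
    next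
      case False
      define y where "y = x2 / B"
      have y: "x1 \<le> y" "y < x2" "y \<le> B ^ n * x1" "x2 = B * y"
        using False Suc.prems B_gt_1 by (auto simp: y_def field_simps)
      have "y < d"
        using y(2) Suc.prems(3) by linarith
      have "f x2 / x2 \<le> q / B * (f y / y)"
        using ratio_scaling[of y] y Suc.prems by simp
      also have "\<dots> \<le> f y / y"
        using pos[of y] y Suc.prems q_ge_1 q_less_B
        by (intro mult_left_le_one_le) auto
      also have "\<dots> \<le> q * (f x1 / x1)"
        using y \<open>y < d\<close> \<open>0 < x1\<close> by (intro Suc.IH)
      finally show ?thesis .
    qed
  qed
qed

lemma ratio_shrink_power:
  assumes "0 < x" "x < d"
  shows "(B / q) ^ n * (f x / x) \<le> f (x / B ^ n) / (x / B ^ n)"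
proof (induction n)
  case 0
  then show ?case by simp
next
  case (Suc n)
  define y where "y = x / B ^ Suc n"
  have "1 \<le> B ^ Suc n"
    using B_gt_1 by (intro one_le_power) simp
  then have "y \<le> x"
    using assms by (simp add: y_def divide_le_eq mult_le_cancel_left1)
  then have y: "0 < y" "y < d" "B * y = x / B ^ n"
    using assms B_gt_1 by (auto simp: y_def)
  have q_pos: "0 < q" using q_ge_1 by simp
  have "(B / q) ^ Suc n * (f x / x) = B / q * ((B / q) ^ n * (f x / x))"
    by simp
  also have "\<dots> \<le> B / q * (f (B * y) / (B * y))"
    using q_pos B_gt_1 by (simp only: y(3)) (rule mult_left_mono[OF Suc.IH], simp)
  also have "\<dots> \<le> B / q * (q / B * (f y / y))"
    using ratio_scaling[OF y(1,2)] q_pos B_gt_1 by (intro mult_left_mono) auto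
  also have "\<dots> = f y / y"
    using q_pos B_gt_1 by simp
  finally show ?case by (simp add: y_def)
qed

lemma ratio_tendsto_at_top: "filterlim (\<lambda>x. f x / x) at_top (at_right 0)"
  unfolding filterlim_at_top
proof
  fix Z :: real
  define x0 where "x0 = d / 2"
  have x0: "0 < x0" "x0 < d" using d_pos by (auto simp: x0_def)
  define c where "c = f x0 / x0 / q"
  have c_pos: "0 < c"
    using pos[OF x0(1)] x0 q_ge_1 by (simp add: c_def)
  have "1 < B / q" using q_less_B q_ge_1 by simp
  then obtain n where "Z / c < (B / q) ^ n"
    using real_arch_pow by blast
  then have Z_le: "Z \<le> (B / q) ^ n * c"
    using c_pos by (simp add: divide_less_eq mult.commute)
  have "Z \<le> f x / x" if "0 < x" "x < x0 / B ^ n" for x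
  proof -
    define t where "t = x * B ^ n"
    have t: "0 < t" "t < x0" "x = t / B ^ n"
      using that B_gt_1 by (auto simp: t_def field_simps)
    have "c \<le> f t / t"
      using ratio_almost_antimono[of t x0] t x0 q_ge_1 by (simp add: c_def field_simps)
    then have "(B / q) ^ n * c \<le> (B / q) ^ n * (f t / t)"
      using q_ge_1 B_gt_1 by (intro mult_left_mono) auto
    also have "\<dots> \<le> f x / x"
      using ratio_shrink_power[of t n] t x0 by simp
    finally show ?thesis using Z_le by simp
  qed
  moreover have "0 < x0 / B ^ n" using x0 B_gt_1 by simp
  ultimately show "eventually (\<lambda>x. Z \<le> f x / x) (at_right 0)"
    unfolding eventually_at_right_field by blast
qed

end

lemma essentially_sublinear_scaling:
  assumes "dimension_function f" and "essentially_sublinear f"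
  obtains B q d where "sublinear_scaling f B q d"
proof -
  obtain B where B: "1 < B"
    and limsup_B: "Limsup (at_right 0) (\<lambda>x. ereal (f (B * x) / f x)) < ereal B"
    using assms(2) unfolding essentially_sublinear_def by blast
  obtain q where limsup_q: "Limsup (at_right 0) (\<lambda>x. ereal (f (B * x) / f x)) < ereal q"
    and "ereal q < ereal B"
    using ereal_dense2[OF limsup_B] by blast
  then have "q < B" by simp
  obtain d where d: "0 < d" "\<And>x. 0 < x \<Longrightarrow> x < d \<Longrightarrow> f (B * x) / f x < q"
    using Limsup_lessD[OF limsup_q] unfolding eventually_at_right_field by auto
  have pos: "\<And>x. 0 < x \<Longrightarrow> 0 < f x" and mono: "mono_on {0<..} f"
    using assms(1) unfolding dimension_function_def by blast+
  have "f (B * x) \<le> q * f x" if "0 < x" "x < d" for x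
    using d(2)[OF that] pos[OF \<open>0 < x\<close>] by (simp add: divide_less_eq)
  with pos mono B \<open>q < B\<close> d(1) have "sublinear_scaling f B q d"
    by unfold_locales
  then show ?thesis by (rule that)
qed

theorem mainTheorem4:
  fixes f :: "real \<Rightarrow> real"
  assumes "dimension_function f" and "essentially_sublinear f"
  shows "filterlim (\<lambda>x. f x / x) at_top (at_right 0) \<and>
     (\<exists>C \<ge> 1. \<exists>\<delta> > 0. \<forall>x1 x2. 0 < x1 \<and> x1 < x2 \<and> x2 < \<delta> \<longrightarrow>
            f x2 / x2 \<le> C * (f x1 / x1))"
proof -
  obtain B q d where "sublinear_scaling f B q d"
    using essentially_sublinear_scaling[OF assms] .
  then interpret sublinear_scaling f B q d .
  have "\<forall>x1 x2. 0 < x1 \<and> x1 < x2 \<and> x2 < d \<longrightarrow> f x2 / x2 \<le> q * (f x1 / x1)"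
    by (blast intro: ratio_almost_antimono less_imp_le)
  with ratio_tendsto_at_top q_ge_1 d_pos show ?thesis
    by blast
qed

end
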